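(* Let $v,v'$ be two different words in the alphabet $\{y,yx\}$ (i.e. products of the subwords $y$ and $yx$, without inverses). Then $v\neq v'$ in the Baumslag–Gersten group $G=\langle x,y,t\mid x^y=x^2,\ x^t=y\rangle$.
   Context: $a^b$ denotes $b^{-1}ab$. *)

theory Defs
  imports Main
begin

text \<open>Generators of the Baumslag--Gersten group G = < x, y, t | x^y = x^2, x^t = y >,
  where a^b = b^-1 a b.\<close>

datatype gen = X | Y | T

type_synonym letter = "gen \<times> bool"

definition inv_letter :: "letter \<Rightarrow> letter" where
  "inv_letter a = (fst a, \<not> snd a)"

definition g :: "gen \<Rightarrow> letter" where "g s = (s, False)"
definition gi :: "gen \<Rightarrow> letter" where "gi s = (s, True)"

text \<open>Relators: x^y x^-2 = y^-1 x y x^-1 x^-1 and x^t y^-1 = t^-1 x t y^-1.\<close>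
definition relators :: "letter list set" where
  "relators = { [gi Y, g X, g Y, gi X, gi X], [gi T, g X, g T, gi Y] }"

inductive eqG :: "letter list \<Rightarrow> letter list \<Rightarrow> bool" where
  refl: "eqG w w"
| sym: "eqG u w \<Longrightarrow> eqG w u"
| trans: "eqG u v \<Longrightarrow> eqG v w \<Longrightarrow> eqG u w"
| cancel: "eqG (u @ [a, inv_letter a] @ w) (u @ w)"
| rel: "r \<in> relators \<Longrightarrow> eqG (u @ r @ w) (u @ w)"

definition block :: "bool \<Rightarrow> letter list" where
  "block b = (if b then [g Y, g X] else [g Y])"

definition yword :: "bool list \<Rightarrow> letter list" where
  "yword bs = concat (map block bs)"

end

theory Submission
  imports Defs Complex_Main
begin

text \<open>The group acts faithfully enough on \<open>\<real> \<times> \<int>\<close> to separate the words: \<open>x\<close> translates the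
  real coordinate by 1, \<open>y\<close> doubles it and raises the integer coordinate by 1, and \<open>t\<close> is a
  bijection conjugating the first map into the second. A word in \<open>y\<close> and \<open>yx\<close> with \<open>n\<close> blocks
  sends \<open>(0, 0)\<close> to \<open>(m, n)\<close>, where \<open>m\<close> is the number with binary digits \<open>[block = yx]\<close>, so
  different words are told apart by their lengths or by their binary values.\<close>

text \<open>Orbits of the translation are labelled by \<open>frac a + k\<close> (position \<open>\<lfloor>a\<rfloor>\<close>), orbits of the
  doubling by \<open>a / 2 ^ k\<close> (position \<open>k\<close>); \<open>t_act\<close> matches labels and positions.\<close>
definition t_act :: "real \<times> int \<Rightarrow> real \<times> int" where
  "t_act p = ((frac (fst p) + of_int (snd p)) * 2 powi \<lfloor>fst p\<rfloor>, \<lfloor>fst p\<rfloor>)"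

definition t_inv_act :: "real \<times> int \<Rightarrow> real \<times> int" where
  "t_inv_act p = (of_int (snd p) + frac (fst p / 2 powi snd p), \<lfloor>fst p / 2 powi snd p\<rfloor>)"

lemma floor_frac_add_of_int [simp]: "\<lfloor>frac a + of_int k\<rfloor> = k"
  by (simp add: floor_unique frac_lt_1)

lemma t_inv_act_t_act [simp]: "t_inv_act (t_act p) = p"
  by (simp add: t_act_def t_inv_act_def frac_def)

lemma t_act_t_inv_act [simp]: "t_act (t_inv_act p) = p"
proof -
  define c where "c = fst p / 2 powi snd p"
  have "\<lfloor>of_int (snd p) + frac c\<rfloor> = snd p"
    using floor_frac_add_of_int[of c "snd p"] by (simp only: add.commute)
  moreover have "(frac c + of_int \<lfloor>c\<rfloor>) * 2 powi snd p = fst p"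
    by (simp add: c_def frac_def)
  ultimately show ?thesis
    by (simp add: t_act_def t_inv_act_def c_def[symmetric] prod_eq_iff)
qed

lemma t_act_translate: "t_act (fst p + 1, snd p) = (2 * fst (t_act p), snd (t_act p) + 1)"
  by (simp add: t_act_def frac_def power_int_add)

fun letter_act :: "letter \<Rightarrow> real \<times> int \<Rightarrow> real \<times> int" where
  "letter_act (X, False) p = (fst p + 1, snd p)"
| "letter_act (X, True) p = (fst p - 1, snd p)"
| "letter_act (Y, False) p = (2 * fst p, snd p + 1)"
| "letter_act (Y, True) p = (fst p / 2, snd p - 1)"
| "letter_act (T, False) p = t_act p"
| "letter_act (T, True) p = t_inv_act p"

text \<open>Letters act on the right, in the order they are read.\<close>
fun word_act :: "letter list \<Rightarrow> real \<times> int \<Rightarrow> real \<times> int" where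
  "word_act [] p = p"
| "word_act (a # w) p = word_act w (letter_act a p)"

lemma word_act_append: "word_act (u @ w) p = word_act w (word_act u p)"
  by (induction u arbitrary: p) auto

lemma letter_act_inv_letter: "letter_act (inv_letter a) (letter_act a p) = p"
  by (cases "(a, p)" rule: letter_act.cases) (auto simp: inv_letter_def)

lemma word_act_relator: "r \<in> relators \<Longrightarrow> word_act r p = p"
  using t_act_translate[of "t_inv_act p"]
  by (auto simp: relators_def g_def gi_def)

lemma eqG_word_act: "eqG u w \<Longrightarrow> word_act u p = word_act w p"
proof (induction arbitrary: p rule: eqG.induct)
  case (cancel u a w)
  then show ?case by (simp add: word_act_append letter_act_inv_letter)
next
  case (rel r u w)
  then show ?case by (simp add: word_act_append word_act_relator)
qed auto

fun binary_value :: "bool list \<Rightarrow> nat" where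
  "binary_value [] = 0"
| "binary_value (b # bs) = (if b then 2 ^ length bs else 0) + binary_value bs"

lemma binary_value_less: "binary_value bs < 2 ^ length bs"
  by (induction bs) auto

lemma binary_value_inj:
  assumes "length bs = length bs'" and "binary_value bs = binary_value bs'"
  shows "bs = bs'"
  using assms
proof (induction bs arbitrary: bs')
  case (Cons b bs)
  then obtain b' cs where bs': "bs' = b' # cs" and len: "length cs = length bs"
    by (cases bs') auto
  have "b = b'"
    using Cons.prems(2) bs' len binary_value_less[of bs] binary_value_less[of cs]
    by (cases b; cases b') auto
  with Cons bs' len show ?case by (simp split: if_splits)
qed simp

lemma word_act_yword:
  "word_act (yword bs) (a, k) = (2 ^ length bs * a + real (binary_value bs), k + int (length bs))"
proof (induction bs arbitrary: a k)
  case (Cons b bs)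
  have "yword (b # bs) = block b @ yword bs" by (simp add: yword_def)
  with Cons show ?case
    by (cases b) (auto simp: word_act_append block_def g_def algebra_simps)
qed (simp add: yword_def)

theorem lemma2p2:
  fixes v v' :: "bool list"
  assumes "v \<noteq> v'"
  shows "\<not> eqG (yword v) (yword v')"
proof
  assume "eqG (yword v) (yword v')"
  then have "word_act (yword v) (0, 0) = word_act (yword v') (0, 0)" by (rule eqG_word_act)
  then have "length v = length v'" and "binary_value v = binary_value v'"
    by (simp_all add: word_act_yword)
  with assms show False using binary_value_inj by blast
qed

end
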